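(* Let $A$ be a finite subset of an abelian group $\mathbf G$, and let $n,m\ge1$ be integers. Then $$D_n(A)|A|^m\le D_{n+m}(A)\le D_n(A)D_m(A),$$ $$S_n(A)|A|^m\le S_{n+m}(A)\le S_n(A)\cdot\min\{S_m(A),D_m(A)\}.$$ Moreover, if $m\ge2$ then $D_n(A)|A|^m\le S_{n+m}(A)$, and if $m=1$ and $n\ge2$ then $D_{n-1}(A)|A|^2\le S_{n+1}(A)$.
   Context: For an integer $k\ge1$, $D_k(A)=|A^k-\Delta(A)|$ and $S_k(A)=|A^k+\Delta(A)|$, where $A^k\subseteq\mathbf G^k$ is the Cartesian power, $\Delta(A)=\{(a,\dots,a)\in\mathbf G^k:a\in A\}$, and sums/differences of subsets of $\mathbf G^k$ are taken coordinatewise, e.g. $A^k-\Delta(A)=\{(a_1-a,\dots,a_k-a):a,a_1,\dots,a_k\in A\}$. *)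

theory Defs
  imports Main
begin

text \<open>Elements of G^k are represented as lists of length k over G.\<close>

definition cart_pow :: "'a set \<Rightarrow> nat \<Rightarrow> 'a list set" where
  "cart_pow A k = {xs. length xs = k \<and> set xs \<subseteq> A}"

definition diag :: "'a set \<Rightarrow> nat \<Rightarrow> 'a list set" where
  "diag A k = {replicate k a | a. a \<in> A}"

definition vplus :: "'a::ab_group_add list set \<Rightarrow> 'a list set \<Rightarrow> 'a list set" where
  "vplus X Y = {map2 (+) xs ys | xs ys. xs \<in> X \<and> ys \<in> Y}"

definition vminus :: "'a::ab_group_add list set \<Rightarrow> 'a list set \<Rightarrow> 'a list set" where
  "vminus X Y = {map2 (-) xs ys | xs ys. xs \<in> X \<and> ys \<in> Y}"

definition Dk :: "nat \<Rightarrow> 'a::ab_group_add set \<Rightarrow> nat" where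
  "Dk k A = card (vminus (cart_pow A k) (diag A k))"

definition Sk :: "nat \<Rightarrow> 'a::ab_group_add set \<Rightarrow> nat" where
  "Sk k A = card (vplus (cart_pow A k) (diag A k))"

end

theory Submission
  imports Defs
begin

text \<open>A vector x lies in A^k - \<Delta>(B) exactly when x + (b,...,b) \<in> A^k for some b \<in> B, and
  A^k + \<Delta>(B) = A^k - \<Delta>(-B). So both D_k and S_k count the vectors of length k that some
  translation from a fixed set moves into A^k, and every inequality is an explicit injection.
  Splitting a vector of length n + m into its first n and last m coordinates gives the upper
  bounds; for the bound by D_m the last m coordinates are recentred at the first one.
  Conversely, extending a vector by translates of arbitrary elements of A gives the lower bounds.
  For D_n |A| \<le> S_{n+1}, a vector x with x + a \<in> A^n and an element c \<in> A are sent to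
  (x + a + c, a + c), which lies in A^{n+1} + \<Delta>(A) and still determines x and c.\<close>

definition shifts :: "'a::ab_group_add set \<Rightarrow> 'a set \<Rightarrow> nat \<Rightarrow> 'a list set" where
  "shifts A B k = {xs. length xs = k \<and> (\<exists>b\<in>B. \<forall>v\<in>set xs. v + b \<in> A)}"

lemma vminus_cart_pow_diag: "vminus (cart_pow A k) (diag B k) = shifts A B k"
proof (intro set_eqI iffI)
  fix xs assume "xs \<in> vminus (cart_pow A k) (diag B k)"
  then obtain ys b where "set ys \<subseteq> A" "b \<in> B" "xs = map (\<lambda>y. y - b) ys" "length ys = k"
    unfolding vminus_def cart_pow_def diag_def by (auto simp: zip_replicate2)
  then show "xs \<in> shifts A B k"
    unfolding shifts_def by (auto intro!: bexI[of _ b])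
next
  fix xs assume "xs \<in> shifts A B k"
  then obtain b where b: "length xs = k" "b \<in> B" "\<forall>v\<in>set xs. v + b \<in> A"
    unfolding shifts_def by auto
  then have "xs = map2 (-) (map (\<lambda>v. v + b) xs) (replicate k b)"
    by (simp add: zip_replicate2 comp_def)
  moreover have "map (\<lambda>v. v + b) xs \<in> cart_pow A k" "replicate k b \<in> diag B k"
    using b unfolding cart_pow_def diag_def by auto
  ultimately show "xs \<in> vminus (cart_pow A k) (diag B k)"
    unfolding vminus_def by blast
qed

lemma vplus_eq_vminus_uminus: "vplus X Y = vminus X (map uminus ` Y)"
proof -
  have "map2 (+) xs ys = map2 (-) xs (map uminus ys)" for xs ys :: "'a list"
    by (simp add: zip_map2 split_def)
  then show ?thesis
    unfolding vplus_def vminus_def by fastforce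
qed

lemma diag_eq_image: "diag B k = (\<lambda>b. replicate k b) ` B"
  unfolding diag_def by auto

lemma image_map_diag: "map f ` diag B k = diag (f ` B) k"
  by (simp add: diag_eq_image image_image)

lemma Dk_eq_card_shifts: "Dk k A = card (shifts A A k)"
  by (simp add: Dk_def vminus_cart_pow_diag)

lemma Sk_eq_card_shifts: "Sk k A = card (shifts A (uminus ` A) k)"
  by (simp add: Sk_def vplus_eq_vminus_uminus image_map_diag vminus_cart_pow_diag)

lemma finite_cart_pow: "finite A \<Longrightarrow> finite (cart_pow A k)"
  using finite_lists_length_eq[of A k] unfolding cart_pow_def by (simp add: conj_commute)

lemma card_cart_pow: "finite A \<Longrightarrow> card (cart_pow A k) = card A ^ k"
  using card_lists_length_eq[of A k] unfolding cart_pow_def by (simp add: conj_commute)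

lemma finite_shifts:
  assumes "finite A" "finite B"
  shows "finite (shifts A B k)"
proof -
  have "vminus (cart_pow A k) (diag B k) = (\<lambda>(xs, ys). map2 (-) xs ys) ` (cart_pow A k \<times> diag B k)"
    unfolding vminus_def by auto
  moreover have "finite (diag B k)"
    using assms(2) by (simp add: diag_eq_image)
  ultimately show ?thesis
    using assms(1) by (simp add: finite_cart_pow flip: vminus_cart_pow_diag)
qed

lemma shifts_take: "xs \<in> shifts A B (n + m) \<Longrightarrow> take n xs \<in> shifts A B n"
  unfolding shifts_def by (auto dest: in_set_takeD)

lemma shifts_drop: "xs \<in> shifts A B (n + m) \<Longrightarrow> drop n xs \<in> shifts A B m"
  unfolding shifts_def by (auto dest: in_set_dropD)

lemma card_shifts_add_le:
  assumes "finite A" "finite B"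
  shows "card (shifts A B (n + m)) \<le> card (shifts A B n) * card (shifts A B m)"
proof -
  have "card (shifts A B (n + m)) \<le> card (shifts A B n \<times> shifts A B m)"
  proof (rule card_inj_on_le)
    show "inj_on (\<lambda>w. (take n w, drop n w)) (shifts A B (n + m))"
      by (rule inj_onI) (metis append_take_drop_id prod.inject)
  qed (auto simp: shifts_take shifts_drop finite_shifts assms)
  then show ?thesis
    by (simp add: card_cartesian_product)
qed

lemma card_shifts_add_le_shifts_self:
  assumes "finite A" "finite B" "n \<ge> 1"
  shows "card (shifts A B (n + m)) \<le> card (shifts A B n) * card (shifts A A m)"
proof -
  let ?recentre = "\<lambda>w. (take n w, map (\<lambda>v. v - hd w) (drop n w))"
  have "inj_on ?recentre (shifts A B (n + m))"
  proof (rule inj_on_inverseI)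
    fix w :: "'a list"
    have "hd (take n w) = hd w"
      using assms(3) by simp
    then show "(\<lambda>(x, y). x @ map (\<lambda>v. v + hd x) y) (?recentre w) = w"
      by (simp add: comp_def)
  qed
  moreover have "?recentre w \<in> shifts A B n \<times> shifts A A m" if w: "w \<in> shifts A B (n + m)" for w
  proof -
    obtain b where b: "length w = n + m" "\<forall>v\<in>set w. v + b \<in> A"
      using w unfolding shifts_def by auto
    with assms(3) have "hd w + b \<in> A"
      by (cases w) auto
    then have "map (\<lambda>v. v - hd w) (drop n w) \<in> shifts A A m"
      using b unfolding shifts_def by (auto intro!: bexI[of _ "hd w + b"] dest: in_set_dropD)
    then show ?thesis
      using shifts_take[OF w] by simp
  qed
  ultimately have "card (shifts A B (n + m)) \<le> card (shifts A B n \<times> shifts A A m)"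
    by (intro card_inj_on_le) (auto simp: finite_shifts assms)
  then show ?thesis
    by (simp add: card_cartesian_product)
qed

lemma shifts_choice:
  obtains \<beta> where "\<forall>x\<in>shifts A B k. \<beta> x \<in> B \<and> (\<forall>v\<in>set x. v + \<beta> x \<in> A)"
proof -
  have "\<forall>x\<in>shifts A B k. \<exists>b. b \<in> B \<and> (\<forall>v\<in>set x. v + b \<in> A)"
    unfolding shifts_def by blast
  then have "\<exists>\<beta>. \<forall>x\<in>shifts A B k. \<beta> x \<in> B \<and> (\<forall>v\<in>set x. v + \<beta> x \<in> A)"
    by (rule bchoice)
  then show ?thesis
    using that by blast
qed

lemma card_shifts_mult_card_pow_le:
  assumes "finite A" "finite B"
  shows "card (shifts A B n) * card A ^ m \<le> card (shifts A B (n + m))"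
proof -
  obtain \<beta> where \<beta>: "\<forall>x\<in>shifts A B n. \<beta> x \<in> B \<and> (\<forall>v\<in>set x. v + \<beta> x \<in> A)"
    by (rule shifts_choice)
  let ?extend = "\<lambda>(x, ys). x @ map (\<lambda>y. y - \<beta> x) ys"
  have "inj_on ?extend (shifts A B n \<times> cart_pow A m)"
  proof (rule inj_on_inverseI)
    fix p assume "p \<in> shifts A B n \<times> cart_pow A m"
    then show "(\<lambda>w. (take n w, map (\<lambda>v. v + \<beta> (take n w)) (drop n w))) (?extend p) = p"
      by (auto simp: shifts_def comp_def)
  qed
  moreover have "?extend (x, ys) \<in> shifts A B (n + m)"
    if "x \<in> shifts A B n" "ys \<in> cart_pow A m" for x ys
  proof -
    have "\<beta> x \<in> B" "\<forall>v\<in>set x. v + \<beta> x \<in> A"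
      using \<beta> that(1) by auto
    then show ?thesis
      using that unfolding shifts_def cart_pow_def by (auto intro!: bexI[of _ "\<beta> x"])
  qed
  ultimately have "card (shifts A B n \<times> cart_pow A m) \<le> card (shifts A B (n + m))"
    by (intro card_inj_on_le) (auto simp: finite_shifts assms)
  then show ?thesis
    by (simp add: card_cartesian_product card_cart_pow assms(1))
qed

lemma Dk_mult_card_le_Sk_Suc:
  assumes "finite A"
  shows "Dk n A * card A \<le> Sk (Suc n) A"
proof -
  obtain \<alpha> where \<alpha>: "\<forall>x\<in>shifts A A n. \<alpha> x \<in> A \<and> (\<forall>v\<in>set x. v + \<alpha> x \<in> A)"
    by (rule shifts_choice)
  let ?embed = "\<lambda>(x, c). map (\<lambda>v. v + \<alpha> x + c) x @ [\<alpha> x + c]"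
  let ?recover = "\<lambda>w. let x = map (\<lambda>v. v - last w) (butlast w) in (x, last w - \<alpha> x)"
  have "inj_on ?embed (shifts A A n \<times> A)"
    by (rule inj_on_inverseI[where g = ?recover]) (auto simp: comp_def Let_def)
  moreover have "?embed (x, c) \<in> shifts A (uminus ` A) (Suc n)"
    if "x \<in> shifts A A n" "c \<in> A" for x c
  proof -
    have "\<alpha> x \<in> A" "\<forall>v\<in>set x. v + \<alpha> x \<in> A"
      using \<alpha> that(1) by auto
    then show ?thesis
      using that unfolding shifts_def by (auto intro!: bexI[of _ c])
  qed
  ultimately have "card (shifts A A n \<times> A) \<le> card (shifts A (uminus ` A) (Suc n))"
    by (intro card_inj_on_le) (auto simp: finite_shifts assms)
  then show ?thesis
    by (simp add: card_cartesian_product Dk_eq_card_shifts Sk_eq_card_shifts)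
qed

lemma Dk_mult_card_pow_le_Sk:
  assumes "finite A" "m \<ge> 1"
  shows "Dk n A * card A ^ m \<le> Sk (n + m) A"
proof -
  obtain k where m: "m = Suc k"
    using assms(2) by (cases m) auto
  have "Dk n A * card A ^ m = Dk n A * card A * card A ^ k"
    by (simp add: m)
  also have "\<dots> \<le> Sk (Suc n) A * card A ^ k"
    using Dk_mult_card_le_Sk_Suc[OF assms(1)] by simp
  also have "\<dots> \<le> Sk (Suc n + k) A"
    using card_shifts_mult_card_pow_le[of A "uminus ` A" "Suc n" k] assms(1)
    by (simp add: Sk_eq_card_shifts)
  finally show ?thesis
    by (simp add: m)
qed

theorem proposition11:
  fixes A :: "'a::ab_group_add set" and n m :: nat
  assumes "finite A" and "n \<ge> 1" and "m \<ge> 1"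
  shows "Dk n A * card A ^ m \<le> Dk (n + m) A \<and> Dk (n + m) A \<le> Dk n A * Dk m A
       \<and> Sk n A * card A ^ m \<le> Sk (n + m) A
       \<and> Sk (n + m) A \<le> Sk n A * min (Sk m A) (Dk m A)
       \<and> (m \<ge> 2 \<longrightarrow> Dk n A * card A ^ m \<le> Sk (n + m) A)
       \<and> (m = 1 \<and> n \<ge> 2 \<longrightarrow> Dk (n - 1) A * card A ^ 2 \<le> Sk (n + 1) A)"
proof -
  have fin: "finite (uminus ` A)"
    using assms(1) by simp
  have "Sk (n + m) A \<le> Sk n A * Sk m A" "Sk (n + m) A \<le> Sk n A * Dk m A"
    using card_shifts_add_le[OF assms(1) fin] card_shifts_add_le_shifts_self[OF assms(1) fin assms(2)]
    by (simp_all add: Sk_eq_card_shifts Dk_eq_card_shifts)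
  moreover have "n \<ge> 2 \<Longrightarrow> Dk (n - 1) A * card A ^ 2 \<le> Sk (n + 1) A"
    using Dk_mult_card_pow_le_Sk[OF assms(1), of 2 "n - 1"] by simp
  ultimately show ?thesis
    using card_shifts_mult_card_pow_le[OF assms(1) assms(1)] card_shifts_add_le[OF assms(1) assms(1)]
      card_shifts_mult_card_pow_le[OF assms(1) fin] Dk_mult_card_pow_le_Sk[OF assms(1,3)]
    by (simp add: Sk_eq_card_shifts Dk_eq_card_shifts)
qed

end
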